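(* Let $H=(V,\mathcal E)$ be a hypergraph with nonnegative hyperedge weights $w_e$ and total weight $W=\sum_{e\in\mathcal E}w_e$. Let $\epsilon\in(0,1)$ and suppose there is a vertex set $O\subseteq V$ with $|O|=r$ and $e(O)\ge (1-\epsilon)W$, where $e(S)=\sum_{e\in\mathcal E:\,e\subseteq S}w_e$. Let $(x^*,z^* )$ be an optimal solution of the linear program \[\min \sum_{v\in V}x_v \quad\text{s.t.}\quad z_e\le x_v\ \ \forall e\in\mathcal E,\ \forall v\in e;\qquad \sum_{e\in\mathcal E}w_e z_e\ge (1-\epsilon)W;\qquad 0\le x_v,z_e\le 1.\] For $\kappa>0$ let $K=\{v\in V: x^*_v\ge \kappa/(1+\kappa)\}$. Then \[W-e(K)\le (1+\kappa)\,\epsilon W\qquad\text{and}\qquad |K|\le \Bigl(1+\frac1\kappa\Bigr) r.\] *)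

theory Defs
  imports Complex_Main
begin

definition hypergraph :: "'v set \<Rightarrow> 'v set set \<Rightarrow> bool" where
  "hypergraph V E \<longleftrightarrow> finite V \<and> finite E \<and> (\<forall>e\<in>E. e \<subseteq> V)"

definition total_weight :: "'v set set \<Rightarrow> ('v set \<Rightarrow> real) \<Rightarrow> real" where
  "total_weight E w = (\<Sum>e\<in>E. w e)"

definition edge_weight_in :: "'v set set \<Rightarrow> ('v set \<Rightarrow> real) \<Rightarrow> 'v set \<Rightarrow> real" where
  "edge_weight_in E w S = (\<Sum>e\<in>{e\<in>E. e \<subseteq> S}. w e)"

definition lp_feasible ::
  "'v set \<Rightarrow> 'v set set \<Rightarrow> ('v set \<Rightarrow> real) \<Rightarrow> real \<Rightarrow> ('v \<Rightarrow> real) \<Rightarrow> ('v set \<Rightarrow> real) \<Rightarrow> bool" where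
  "lp_feasible V E w \<epsilon> x z \<longleftrightarrow>
     (\<forall>e\<in>E. \<forall>v\<in>e. z e \<le> x v) \<and>
     (\<Sum>e\<in>E. w e * z e) \<ge> (1 - \<epsilon>) * total_weight E w \<and>
     (\<forall>v\<in>V. 0 \<le> x v \<and> x v \<le> 1) \<and>
     (\<forall>e\<in>E. 0 \<le> z e \<and> z e \<le> 1)"

definition lp_optimal ::
  "'v set \<Rightarrow> 'v set set \<Rightarrow> ('v set \<Rightarrow> real) \<Rightarrow> real \<Rightarrow> ('v \<Rightarrow> real) \<Rightarrow> ('v set \<Rightarrow> real) \<Rightarrow> bool" where
  "lp_optimal V E w \<epsilon> x z \<longleftrightarrow> lp_feasible V E w \<epsilon> x z \<and>
     (\<forall>x' z'. lp_feasible V E w \<epsilon> x' z' \<longrightarrow> (\<Sum>v\<in>V. x v) \<le> (\<Sum>v\<in>V. x' v))"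

end

theory Submission
  imports Defs
begin

text \<open>An edge not inside \<open>K = {v. x v \<ge> t}\<close> has a vertex with \<open>x v < t\<close>, so its LP value is
  below \<open>t\<close>; hence the covering constraint forces \<open>(1 - t)(W - e(K)) \<le> \<epsilon> W\<close>, which for
  \<open>t = \<kappa>/(1+\<kappa>)\<close> is the first bound. The indicator vectors of \<open>O\<close> form a feasible
  solution of cost \<open>r\<close>, so \<open>\<Sum>\<^sub>v x v \<le> r\<close>, and Markov's inequality gives \<open>t |K| \<le> r\<close>.\<close>

lemma lp_feasible_uncovered_weight:
  assumes "hypergraph V E" and "\<forall>e\<in>E. 0 \<le> w e" and "lp_feasible V E w \<epsilon> x z"
  shows "(1 - t) * (total_weight E w - edge_weight_in E w {v\<in>V. t \<le> x v})
           \<le> \<epsilon> * total_weight E w"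
proof -
  define K where "K = {v\<in>V. t \<le> x v}"
  define EK where "EK = {e\<in>E. e \<subseteq> K}"
  have "finite E" and E_sub: "\<forall>e\<in>E. e \<subseteq> V"
    using assms(1) unfolding hypergraph_def by auto
  have EK_sub: "EK \<subseteq> E" unfolding EK_def by auto
  have z_le_x: "\<forall>e\<in>E. \<forall>v\<in>e. z e \<le> x v" and z_01: "\<forall>e\<in>E. 0 \<le> z e \<and> z e \<le> 1"
    and covering: "(1 - \<epsilon>) * total_weight E w \<le> (\<Sum>e\<in>E. w e * z e)"
    using assms(3) unfolding lp_feasible_def by auto
  have z_outside: "z e \<le> t" if e: "e \<in> E - EK" for e
  proof -
    obtain v where "v \<in> e" and "v \<notin> K"
      using e unfolding EK_def by blast
    then have "x v < t" using e E_sub unfolding K_def by auto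
    with \<open>v \<in> e\<close> e z_le_x show ?thesis by force
  qed
  have W_split: "total_weight E w = sum w EK + sum w (E - EK)"
    unfolding total_weight_def using sum.subset_diff[OF EK_sub \<open>finite E\<close>]
    by (simp add: add.commute)
  have "(1 - \<epsilon>) * total_weight E w \<le> (\<Sum>e\<in>EK. w e * z e) + (\<Sum>e\<in>E - EK. w e * z e)"
    using covering sum.subset_diff[OF EK_sub \<open>finite E\<close>, of "\<lambda>e. w e * z e"] by simp
  also have "\<dots> \<le> (\<Sum>e\<in>EK. w e) + (\<Sum>e\<in>E - EK. w e * t)"
  proof (rule add_mono; rule sum_mono)
    show "w e * z e \<le> w e" if "e \<in> EK" for e
      using that EK_sub assms(2) z_01 by (auto intro: mult_left_le)
    show "w e * z e \<le> w e * t" if "e \<in> E - EK" for e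
      using that assms(2) z_outside by (auto intro: mult_left_mono)
  qed
  finally have "(1 - \<epsilon>) * (sum w EK + sum w (E - EK)) \<le> sum w EK + t * sum w (E - EK)"
    using W_split by (simp add: sum_distrib_left mult.commute)
  moreover have "edge_weight_in E w K = sum w EK"
    unfolding edge_weight_in_def EK_def ..
  ultimately show ?thesis
    using W_split unfolding K_def by (simp add: algebra_simps)
qed

lemma lp_feasible_indicator:
  assumes "finite E" and "edge_weight_in E w S \<ge> (1 - \<epsilon>) * total_weight E w"
  shows "lp_feasible V E w \<epsilon> (\<lambda>v. of_bool (v \<in> S)) (\<lambda>e. of_bool (e \<subseteq> S))"
proof -
  have "(\<Sum>e\<in>E. w e * of_bool (e \<subseteq> S)) = edge_weight_in E w S"
    unfolding edge_weight_in_def sum.inter_filter[OF assms(1)] by (rule sum.cong) auto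
  with assms(2) show ?thesis
    unfolding lp_feasible_def by auto
qed

lemma lp_optimal_sum_le_card:
  assumes "hypergraph V E" and "S \<subseteq> V"
    and "edge_weight_in E w S \<ge> (1 - \<epsilon>) * total_weight E w"
    and "lp_optimal V E w \<epsilon> x z"
  shows "(\<Sum>v\<in>V. x v) \<le> card S"
proof -
  have "finite V" "finite E" using assms(1) unfolding hypergraph_def by auto
  have "(\<Sum>v\<in>V. x v) \<le> (\<Sum>v\<in>V. of_bool (v \<in> S))"
    using assms(4) lp_feasible_indicator[OF \<open>finite E\<close> assms(3)] unfolding lp_optimal_def by blast
  also have "\<dots> = card S"
    using \<open>finite V\<close> assms(2) by (simp add: Int_absorb1)
  finally show ?thesis .
qed

lemma card_superlevel_le_sum:
  fixes x :: "'a \<Rightarrow> real"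
  assumes "finite V" and "\<forall>v\<in>V. 0 \<le> x v"
  shows "t * card {v\<in>V. t \<le> x v} \<le> (\<Sum>v\<in>V. x v)"
proof -
  have "t * card {v\<in>V. t \<le> x v} = (\<Sum>v\<in>{v\<in>V. t \<le> x v}. t)" by simp
  also have "\<dots> \<le> (\<Sum>v\<in>{v\<in>V. t \<le> x v}. x v)" by (rule sum_mono) simp
  also have "\<dots> \<le> (\<Sum>v\<in>V. x v)" using assms by (intro sum_mono2) auto
  finally show ?thesis .
qed

theorem theorem1:
  fixes V :: "'v set" and E :: "'v set set" and w :: "'v set \<Rightarrow> real"
    and \<epsilon> \<kappa> :: real and Opt :: "'v set" and r :: nat
    and x :: "'v \<Rightarrow> real" and z :: "'v set \<Rightarrow> real"
  assumes "hypergraph V E"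
    and "\<forall>e\<in>E. 0 \<le> w e"
    and "0 < \<epsilon>" and "\<epsilon> < 1"
    and "Opt \<subseteq> V" and "card Opt = r"
    and "edge_weight_in E w Opt \<ge> (1 - \<epsilon>) * total_weight E w"
    and "lp_optimal V E w \<epsilon> x z"
    and "0 < \<kappa>"
  shows "total_weight E w - edge_weight_in E w {v\<in>V. x v \<ge> \<kappa> / (1 + \<kappa>)}
           \<le> (1 + \<kappa>) * \<epsilon> * total_weight E w
       \<and> real (card {v\<in>V. x v \<ge> \<kappa> / (1 + \<kappa>)}) \<le> (1 + 1 / \<kappa>) * real r"
proof
  define t where "t = \<kappa> / (1 + \<kappa>)"
  define K where "K = {v\<in>V. t \<le> x v}"
  have "(1 + \<kappa>) * (1 - t) = 1" and "(1 + 1 / \<kappa>) * t = 1"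
    using \<open>0 < \<kappa>\<close> unfolding t_def by (simp_all add: field_simps add_nonneg_eq_0_iff)
  have "finite V" using assms(1) unfolding hypergraph_def by blast
  have feasible: "lp_feasible V E w \<epsilon> x z"
    using assms(8) unfolding lp_optimal_def by blast
  have "total_weight E w - edge_weight_in E w K
      = (1 + \<kappa>) * ((1 - t) * (total_weight E w - edge_weight_in E w K))"
    using \<open>(1 + \<kappa>) * (1 - t) = 1\<close> by (metis mult.assoc mult_1)
  also have "\<dots> \<le> (1 + \<kappa>) * (\<epsilon> * total_weight E w)"
    using lp_feasible_uncovered_weight[OF assms(1,2) feasible, of t] \<open>0 < \<kappa>\<close>
    unfolding K_def by (intro mult_left_mono) auto
  finally show "total_weight E w - edge_weight_in E w {v\<in>V. x v \<ge> \<kappa> / (1 + \<kappa>)}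
      \<le> (1 + \<kappa>) * \<epsilon> * total_weight E w"
    unfolding K_def t_def by (simp add: mult.assoc)
  have "\<forall>v\<in>V. 0 \<le> x v" using feasible unfolding lp_feasible_def by blast
  then have "t * card K \<le> r"
    using card_superlevel_le_sum[OF \<open>finite V\<close>, of x t] lp_optimal_sum_le_card[OF assms(1,5,7,8)]
      assms(6) unfolding K_def by linarith
  have "real (card K) = (1 + 1 / \<kappa>) * (t * card K)"
    using \<open>(1 + 1 / \<kappa>) * t = 1\<close> by (metis mult.assoc mult_1)
  also have "\<dots> \<le> (1 + 1 / \<kappa>) * r"
    using \<open>t * card K \<le> r\<close> \<open>0 < \<kappa>\<close> by (intro mult_left_mono) auto
  finally show "real (card {v\<in>V. x v \<ge> \<kappa> / (1 + \<kappa>)}) \<le> (1 + 1 / \<kappa>) * real r"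
    unfolding K_def t_def .
qed

end
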